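(* Every COI-graph $G$ has a proxy graph, i.e. there exists a NOI-graph $G'$ on the same vertex set such that the kernels of the hybrid Laplacians $\mathcal{L}(G)$ and $\mathcal{L}(G')$ are identical.
   Context: A hybrid graph $G=(V,E_L+E_Q)$ has a set $E_L$ of $L$-edges and a set $E_Q$ of $Q$-edges. Its hybrid Laplacian is $\mathcal{L}(G)=L(S_l)+Q(S_q)$ with $S_l=(V,E_L)$, $S_q=(V,E_Q)$, $L=D-A$ the signed Laplacian and $Q=D+A$ the signless Laplacian. $G$ is a NOI-graph if $S_q$ is bipartite and no vertex is incident to both a $Q$-edge and an $L$-edge. $G$ is a COI-graph if $S_q$ is bipartite with a bipartition $(P_1,P_2)$ of $V$ (every $Q$-edge joining $P_1$ to $P_2$) such that every $L$-edge joins two vertices in the same part. *)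

theory Defs
  imports Complex_Main
begin

definition hybrid_graph :: "'a set \<Rightarrow> 'a set set \<Rightarrow> 'a set set \<Rightarrow> bool" where
  "hybrid_graph V EL EQ \<longleftrightarrow> finite V \<and> (\<forall>e \<in> EL \<union> EQ. e \<subseteq> V \<and> card e = 2) \<and> EL \<inter> EQ = {}"

definition deg :: "'a set set \<Rightarrow> 'a \<Rightarrow> nat" where
  "deg E v = card {e \<in> E. v \<in> e}"

definition adj :: "'a set set \<Rightarrow> 'a \<Rightarrow> 'a \<Rightarrow> real" where
  "adj E i j = (if i \<noteq> j \<and> {i, j} \<in> E then 1 else 0)"

definition laplacian :: "'a set set \<Rightarrow> 'a \<Rightarrow> 'a \<Rightarrow> real" where
  "laplacian E i j = (if i = j then real (deg E i) else 0) - adj E i j"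

definition signless_laplacian :: "'a set set \<Rightarrow> 'a \<Rightarrow> 'a \<Rightarrow> real" where
  "signless_laplacian E i j = (if i = j then real (deg E i) else 0) + adj E i j"

definition hybrid_laplacian :: "'a set set \<Rightarrow> 'a set set \<Rightarrow> 'a \<Rightarrow> 'a \<Rightarrow> real" where
  "hybrid_laplacian EL EQ i j = laplacian EL i j + signless_laplacian EQ i j"

text \<open>Kernel of the V x V matrix M: vectors in R^V (functions vanishing off V) with Mx = 0.\<close>

definition mat_kernel :: "'a set \<Rightarrow> ('a \<Rightarrow> 'a \<Rightarrow> real) \<Rightarrow> ('a \<Rightarrow> real) set" where
  "mat_kernel V M = {x. (\<forall>v. v \<notin> V \<longrightarrow> x v = 0) \<and> (\<forall>i \<in> V. (\<Sum>j\<in>V. M i j * x j) = 0)}"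

definition bipartite_on :: "'a set \<Rightarrow> 'a set set \<Rightarrow> bool" where
  "bipartite_on V E \<longleftrightarrow> (\<exists>P1 P2. P1 \<union> P2 = V \<and> P1 \<inter> P2 = {} \<and>
      (\<forall>e \<in> E. \<exists>a \<in> P1. \<exists>b \<in> P2. e = {a, b}))"

definition NOI_graph :: "'a set \<Rightarrow> 'a set set \<Rightarrow> 'a set set \<Rightarrow> bool" where
  "NOI_graph V EL EQ \<longleftrightarrow> hybrid_graph V EL EQ \<and> bipartite_on V EQ \<and>
     (\<forall>v \<in> V. \<not> ((\<exists>e \<in> EQ. v \<in> e) \<and> (\<exists>e \<in> EL. v \<in> e)))"

definition COI_graph :: "'a set \<Rightarrow> 'a set set \<Rightarrow> 'a set set \<Rightarrow> bool" where
  "COI_graph V EL EQ \<longleftrightarrow> hybrid_graph V EL EQ \<and>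
     (\<exists>P1 P2. P1 \<union> P2 = V \<and> P1 \<inter> P2 = {} \<and>
        (\<forall>e \<in> EQ. \<exists>a \<in> P1. \<exists>b \<in> P2. e = {a, b}) \<and>
        (\<forall>e \<in> EL. e \<subseteq> P1 \<or> e \<subseteq> P2))"

end

theory Submission
  imports Defs
begin

text \<open>
  The quadratic form of the hybrid Laplacian is the sum of \<open>(x a - x b)\<^sup>2\<close> over the L-edges
  and of \<open>(x a + x b)\<^sup>2\<close> over the Q-edges, so its kernel consists of the vectors with
  \<open>x a = x b\<close> along L-edges and \<open>x a = - x b\<close> along Q-edges. In a COI-graph with
  bipartition \<open>(P1, P2)\<close>, flipping the sign of \<open>x\<close> on \<open>P2\<close> turns all these conditions
  into \<open>x a = x b\<close>, so the kernel depends only on the bipartition and on the connected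
  components. The proxy keeps both: a component meeting both parts becomes the complete
  bipartite graph of Q-edges between its two sides, a component inside one part becomes the
  complete graph of L-edges on it, and then no vertex meets edges of both kinds.
\<close>

lemma adj_commute: "adj E i j = adj E j i"
  unfolding adj_def by (auto simp: insert_commute)

lemma card_2_elem_doubleton: "card e = 2 \<Longrightarrow> i \<in> e \<Longrightarrow> \<exists>j. j \<noteq> i \<and> e = {i, j}"
  by (auto simp: card_2_iff)

lemma sum_adj_eq_deg:
  assumes "finite V" and E: "\<forall>e\<in>E. e \<subseteq> V \<and> card e = 2"
  shows "(\<Sum>j\<in>V. adj E i j) = real (deg E i)"
proof -
  let ?N = "{j\<in>V. j \<noteq> i \<and> {i, j} \<in> E}"
  have "{e\<in>E. i \<in> e} = (\<lambda>j. {i, j}) ` ?N"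
  proof (intro equalityI subsetI)
    fix e assume "e \<in> {e\<in>E. i \<in> e}"
    with E have "e \<in> E" "e \<subseteq> V" "card e = 2" "i \<in> e" by auto
    then obtain j where "j \<noteq> i" "e = {i, j}"
      using card_2_elem_doubleton by meson
    with \<open>e \<in> E\<close> \<open>e \<subseteq> V\<close> show "e \<in> (\<lambda>j. {i, j}) ` ?N" by auto
  qed auto
  moreover have "inj_on (\<lambda>j. {i, j}) ?N"
    by (auto simp: inj_on_def doubleton_eq_iff)
  ultimately have "deg E i = card ?N"
    by (simp add: deg_def card_image)
  moreover have "(\<Sum>j\<in>V. adj E i j) = real (card ?N)"
    unfolding adj_def using \<open>finite V\<close> by (simp add: sum.inter_filter[symmetric] eq_commute)
  ultimately show ?thesis by simp
qed

lemma hybrid_laplacian_row: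
  assumes "finite V"
    and EL: "\<forall>e\<in>EL. e \<subseteq> V \<and> card e = 2" and EQ: "\<forall>e\<in>EQ. e \<subseteq> V \<and> card e = 2"
    and "i \<in> V"
  shows "(\<Sum>j\<in>V. hybrid_laplacian EL EQ i j * x j) =
    (\<Sum>j\<in>V. adj EL i j * (x i - x j) + adj EQ i j * (x i + x j))"
proof -
  have diag: "(\<Sum>j\<in>V. (if i = j then d else 0) * x j) = d * x i" for d :: real
  proof -
    have "(\<Sum>j\<in>V. (if i = j then d else 0) * x j) = (\<Sum>j\<in>V. if i = j then d * x j else 0)"
      by (rule sum.cong) auto
    then show ?thesis using assms by simp
  qed
  have "(\<Sum>j\<in>V. hybrid_laplacian EL EQ i j * x j) =
      (real (deg EL i) + real (deg EQ i)) * x i - (\<Sum>j\<in>V. adj EL i j * x j) + (\<Sum>j\<in>V. adj EQ i j * x j)"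
    unfolding hybrid_laplacian_def laplacian_def signless_laplacian_def
    by (simp only: ring_distribs sum.distrib sum_subtractf diag)
  also have "\<dots> = (\<Sum>j\<in>V. adj EL i j * (x i - x j) + adj EQ i j * (x i + x j))"
    by (simp add: algebra_simps sum.distrib sum_subtractf sum_distrib_left flip:
        sum_adj_eq_deg[OF \<open>finite V\<close> EL, of i] sum_adj_eq_deg[OF \<open>finite V\<close> EQ, of i])
  finally show ?thesis .
qed

lemma hybrid_laplacian_quadratic_form:
  assumes "finite V"
    and EL: "\<forall>e\<in>EL. e \<subseteq> V \<and> card e = 2" and EQ: "\<forall>e\<in>EQ. e \<subseteq> V \<and> card e = 2"
  shows "2 * (\<Sum>i\<in>V. x i * (\<Sum>j\<in>V. hybrid_laplacian EL EQ i j * x j)) =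
    (\<Sum>i\<in>V. \<Sum>j\<in>V. adj EL i j * (x i - x j)^2 + adj EQ i j * (x i + x j)^2)"
proof -
  define f where "f i j = x i * (adj EL i j * (x i - x j) + adj EQ i j * (x i + x j))" for i j
  have S: "(\<Sum>i\<in>V. x i * (\<Sum>j\<in>V. hybrid_laplacian EL EQ i j * x j)) = (\<Sum>i\<in>V. \<Sum>j\<in>V. f i j)"
    by (simp add: hybrid_laplacian_row[OF assms] f_def sum_distrib_left)
  have "2 * (\<Sum>i\<in>V. \<Sum>j\<in>V. f i j) = (\<Sum>i\<in>V. \<Sum>j\<in>V. f i j) + (\<Sum>i\<in>V. \<Sum>j\<in>V. f j i)"
    using sum.swap[of "\<lambda>j i. f i j" V V] by (simp only: mult_2)
  also have "\<dots> = (\<Sum>i\<in>V. \<Sum>j\<in>V. f i j + f j i)"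
    by (simp add: sum.distrib)
  also have "\<dots> = (\<Sum>i\<in>V. \<Sum>j\<in>V. adj EL i j * (x i - x j)^2 + adj EQ i j * (x i + x j)^2)"
  proof (intro sum.cong refl)
    fix i j
    show "f i j + f j i = adj EL i j * (x i - x j)^2 + adj EQ i j * (x i + x j)^2"
      unfolding f_def using adj_commute[of EL j i] adj_commute[of EQ j i]
      by (simp add: power2_eq_square algebra_simps)
  qed
  finally show ?thesis
    unfolding S .
qed

lemma adj_eq_1_iff:
  assumes "\<forall>e\<in>E. card e = 2"
  shows "adj E a b = 1 \<longleftrightarrow> {a, b} \<in> E"
  using assms unfolding adj_def by force

lemma mat_kernel_hybrid_laplacian:
  assumes "hybrid_graph V EL EQ"
  shows "x \<in> mat_kernel V (hybrid_laplacian EL EQ) \<longleftrightarrow> (\<forall>v. v \<notin> V \<longrightarrow> x v = 0) \<and>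
    (\<forall>a b. {a, b} \<in> EL \<longrightarrow> x a = x b) \<and> (\<forall>a b. {a, b} \<in> EQ \<longrightarrow> x a = - x b)"
proof -
  have fin: "finite V" and EL: "\<forall>e\<in>EL. e \<subseteq> V \<and> card e = 2" and EQ: "\<forall>e\<in>EQ. e \<subseteq> V \<and> card e = 2"
    using assms unfolding hybrid_graph_def by auto
  have adj_nonneg: "adj E i j \<ge> 0" for E i j
    by (simp add: adj_def)
  have "(\<forall>i\<in>V. (\<Sum>j\<in>V. hybrid_laplacian EL EQ i j * x j) = 0) \<longleftrightarrow>
    (\<forall>a b. {a, b} \<in> EL \<longrightarrow> x a = x b) \<and> (\<forall>a b. {a, b} \<in> EQ \<longrightarrow> x a = - x b)"
  proof
    assume "\<forall>i\<in>V. (\<Sum>j\<in>V. hybrid_laplacian EL EQ i j * x j) = 0"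
    then have "(\<Sum>i\<in>V. \<Sum>j\<in>V. adj EL i j * (x i - x j)^2 + adj EQ i j * (x i + x j)^2) = 0"
      using hybrid_laplacian_quadratic_form[OF fin EL EQ, of x] by simp
    then have terms_0: "adj EL i j * (x i - x j)^2 = 0 \<and> adj EQ i j * (x i + x j)^2 = 0"
      if "i \<in> V" "j \<in> V" for i j
      using that fin by (simp add: sum_nonneg sum_nonneg_eq_0_iff add_nonneg_eq_0_iff adj_nonneg)
    have edge: "a \<in> V" "b \<in> V" "adj E a b = 1"
      if "{a, b} \<in> E" "\<forall>e\<in>E. e \<subseteq> V \<and> card e = 2" for E a b
      using that by (auto simp: adj_eq_1_iff)
    show "(\<forall>a b. {a, b} \<in> EL \<longrightarrow> x a = x b) \<and> (\<forall>a b. {a, b} \<in> EQ \<longrightarrow> x a = - x b)"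
    proof (intro conjI allI impI)
      fix a b
      show "x a = x b" if "{a, b} \<in> EL"
        using terms_0[of a b] edge[OF that EL] by simp
      show "x a = - x b" if "{a, b} \<in> EQ"
        using terms_0[of a b] edge[OF that EQ] by (simp add: add_eq_0_iff)
    qed
  next
    assume "(\<forall>a b. {a, b} \<in> EL \<longrightarrow> x a = x b) \<and> (\<forall>a b. {a, b} \<in> EQ \<longrightarrow> x a = - x b)"
    then have terms_0: "adj EL i j * (x i - x j) = 0" "adj EQ i j * (x i + x j) = 0" for i j
      by (auto simp: adj_def)
    show "\<forall>i\<in>V. (\<Sum>j\<in>V. hybrid_laplacian EL EQ i j * x j) = 0"
      by (simp add: hybrid_laplacian_row[OF fin EL EQ] terms_0)
  qed
  then show ?thesis
    unfolding mat_kernel_def by blast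
qed

definition edge_constant :: "'a set set \<Rightarrow> ('a \<Rightarrow> 'b) \<Rightarrow> bool" where
  "edge_constant E y \<longleftrightarrow> (\<forall>a b. {a, b} \<in> E \<longrightarrow> y a = y b)"

lemma edge_constant_Un: "edge_constant (A \<union> B) y \<longleftrightarrow> edge_constant A y \<and> edge_constant B y"
  unfolding edge_constant_def by blast

lemma mat_kernel_hybrid_laplacian_switching:
  assumes "hybrid_graph V EL EQ" and "P1 \<union> P2 = V" and "P1 \<inter> P2 = {}"
    and Q: "\<forall>e\<in>EQ. \<exists>a\<in>P1. \<exists>b\<in>P2. e = {a, b}" and L: "\<forall>e\<in>EL. e \<subseteq> P1 \<or> e \<subseteq> P2"
  shows "x \<in> mat_kernel V (hybrid_laplacian EL EQ) \<longleftrightarrow>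
    (\<forall>v. v \<notin> V \<longrightarrow> x v = 0) \<and> edge_constant (EL \<union> EQ) (\<lambda>v. if v \<in> P1 then x v else - x v)"
proof -
  have L_iff: "x a = x b \<longleftrightarrow> (if a \<in> P1 then x a else - x a) = (if b \<in> P1 then x b else - x b)"
    if "{a, b} \<in> EL" for a b
  proof -
    from L that \<open>P1 \<inter> P2 = {}\<close> have "a \<in> P1 \<longleftrightarrow> b \<in> P1"
      by blast
    then show ?thesis
      by auto
  qed
  have Q_iff: "x a = - x b \<longleftrightarrow> (if a \<in> P1 then x a else - x a) = (if b \<in> P1 then x b else - x b)"
    if "{a, b} \<in> EQ" for a b
  proof -
    from Q that \<open>P1 \<inter> P2 = {}\<close> have "a \<in> P1 \<longleftrightarrow> b \<notin> P1"
      by (fastforce simp: doubleton_eq_iff)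
    then show ?thesis
      by auto
  qed
  show ?thesis
    unfolding mat_kernel_hybrid_laplacian[OF assms(1)] edge_constant_Un
    by (simp add: edge_constant_def L_iff Q_iff)
qed

text \<open>
  \<open>(a, b) \<in> component_rel V E\<close> iff \<open>a\<close> and \<open>b\<close> lie in the same connected component of
  \<open>(V, E)\<close>: defining it through the functions that are constant along edges avoids paths.
\<close>

definition component_rel :: "'a set \<Rightarrow> 'a set set \<Rightarrow> 'a rel" where
  "component_rel V E =
    {(a, b). a \<in> V \<and> b \<in> V \<and> (\<forall>y :: 'a \<Rightarrow> real. edge_constant E y \<longrightarrow> y a = y b)}"

lemma equiv_component_rel: "equiv V (component_rel V E)"
  unfolding component_rel_def by (rule equivI) (auto simp: refl_on_def sym_def trans_def)

lemma edge_constant_iff_component_rel: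
  fixes y :: "'a \<Rightarrow> real"
  assumes "\<forall>e\<in>E. e \<subseteq> V"
  shows "edge_constant E y \<longleftrightarrow> (\<forall>(a, b) \<in> component_rel V E. y a = y b)"
proof
  assume "edge_constant E y"
  then show "\<forall>(a, b) \<in> component_rel V E. y a = y b"
    by (auto simp: component_rel_def)
next
  assume "\<forall>(a, b) \<in> component_rel V E. y a = y b"
  moreover have "(a, b) \<in> component_rel V E" if ab: "{a, b} \<in> E" for a b
  proof -
    have "a \<in> V" "b \<in> V"
      using assms ab by auto
    moreover have "z a = z b" if "edge_constant E z" for z :: "'a \<Rightarrow> real"
      using that ab unfolding edge_constant_def by simp
    ultimately show ?thesis
      unfolding component_rel_def by simp
  qed
  ultimately show "edge_constant E y"
    by (auto simp: edge_constant_def)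
qed

definition proxy_Q_edges :: "'a set \<Rightarrow> 'a set \<Rightarrow> 'a rel \<Rightarrow> 'a set set" where
  "proxy_Q_edges P1 P2 R = {{a, b} | a b. a \<in> P1 \<and> b \<in> P2 \<and> (a, b) \<in> R}"

definition proxy_L_edges :: "'a set \<Rightarrow> 'a set \<Rightarrow> 'a rel \<Rightarrow> 'a set set" where
  "proxy_L_edges P1 P2 R =
    {{a, b} | a b. a \<noteq> b \<and> (a, b) \<in> R \<and> (R `` {a} \<subseteq> P1 \<or> R `` {a} \<subseteq> P2)}"

lemma equiv_class_of_pair:
  assumes "equiv V R" and "(a, b) \<in> R" and "v \<in> {a, b}"
  shows "R `` {v} = R `` {a}" and "{a, b} \<subseteq> R `` {v}"
proof -
  have "a \<in> V"
    using equiv_type[OF assms(1)] assms(2) by blast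
  show class_eq: "R `` {v} = R `` {a}"
    using assms equiv_class_eq by (metis insertE singletonD)
  show "{a, b} \<subseteq> R `` {v}"
    unfolding class_eq using assms(2) equiv_class_self[OF assms(1) \<open>a \<in> V\<close>] by blast
qed

context
  fixes V P1 P2 :: "'a set" and R :: "'a rel"
  assumes R: "equiv V R" and parts: "P1 \<union> P2 = V" "P1 \<inter> P2 = {}"
begin

lemma proxy_Q_edge_class_meets_both_parts:
  assumes "e \<in> proxy_Q_edges P1 P2 R" and "v \<in> e"
  shows "\<not> (R `` {v} \<subseteq> P1 \<or> R `` {v} \<subseteq> P2)"
proof -
  obtain a b where "e = {a, b}" "a \<in> P1" "b \<in> P2" "(a, b) \<in> R"
    using assms(1) unfolding proxy_Q_edges_def by auto
  with \<open>v \<in> e\<close> have "{a, b} \<subseteq> R `` {v}"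
    using equiv_class_of_pair[OF R] by blast
  with \<open>a \<in> P1\<close> \<open>b \<in> P2\<close> parts show ?thesis
    by blast
qed

lemma proxy_L_edge_class_within_part:
  assumes "e \<in> proxy_L_edges P1 P2 R" and "v \<in> e"
  shows "R `` {v} \<subseteq> P1 \<or> R `` {v} \<subseteq> P2"
proof -
  obtain a b where "e = {a, b}" "(a, b) \<in> R" and a: "R `` {a} \<subseteq> P1 \<or> R `` {a} \<subseteq> P2"
    using assms(1) unfolding proxy_L_edges_def by auto
  with \<open>v \<in> e\<close> show ?thesis
    using equiv_class_of_pair(1)[OF R] by metis
qed

lemma proxy_L_edges_within_part: "\<forall>e\<in>proxy_L_edges P1 P2 R. e \<subseteq> P1 \<or> e \<subseteq> P2"
proof
  fix e assume e: "e \<in> proxy_L_edges P1 P2 R"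
  then obtain a b where "e = {a, b}" "(a, b) \<in> R"
    unfolding proxy_L_edges_def by auto
  then have "e \<subseteq> R `` {a}"
    using equiv_class_of_pair(2)[OF R] by blast
  then show "e \<subseteq> P1 \<or> e \<subseteq> P2"
    using proxy_L_edge_class_within_part[OF e] \<open>e = {a, b}\<close> by blast
qed

lemma NOI_graph_proxy:
  assumes "finite V"
  shows "NOI_graph V (proxy_L_edges P1 P2 R) (proxy_Q_edges P1 P2 R)"
proof -
  have "R \<subseteq> V \<times> V"
    using R by (rule equiv_type)
  moreover have "a \<noteq> b" if "a \<in> P1" "b \<in> P2" for a b
    using that parts by blast
  ultimately have edges: "\<forall>e \<in> proxy_L_edges P1 P2 R \<union> proxy_Q_edges P1 P2 R. e \<subseteq> V \<and> card e = 2"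
    by (auto simp: proxy_L_edges_def proxy_Q_edges_def)
  have no_shared_vertex: "\<not> (v \<in> e \<and> e \<in> proxy_Q_edges P1 P2 R \<and> v \<in> e' \<and> e' \<in> proxy_L_edges P1 P2 R)"
    for v e e'
    using proxy_Q_edge_class_meets_both_parts proxy_L_edge_class_within_part by blast
  have "proxy_L_edges P1 P2 R \<inter> proxy_Q_edges P1 P2 R = {}"
  proof (rule equals0I)
    fix e assume e: "e \<in> proxy_L_edges P1 P2 R \<inter> proxy_Q_edges P1 P2 R"
    then obtain a b where "e = {a, b}"
      unfolding proxy_Q_edges_def by blast
    with e show False
      using no_shared_vertex[of a e e] by blast
  qed
  moreover have "bipartite_on V (proxy_Q_edges P1 P2 R)"
    unfolding bipartite_on_def proxy_Q_edges_def using parts by blast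
  ultimately show ?thesis
    unfolding NOI_graph_def hybrid_graph_def using assms edges no_shared_vertex by blast
qed

lemma edge_constant_proxy_iff:
  "edge_constant (proxy_L_edges P1 P2 R \<union> proxy_Q_edges P1 P2 R) y \<longleftrightarrow> (\<forall>(a, b) \<in> R. y a = y b)"
proof
  have RV: "R \<subseteq> V \<times> V" and "sym R" and "trans R"
    using R by (auto elim: equivE)
  assume y: "edge_constant (proxy_L_edges P1 P2 R \<union> proxy_Q_edges P1 P2 R) y"
  have cross: "y a = y b" if "(a, b) \<in> R" and "a \<in> P1 \<longleftrightarrow> b \<notin> P1" for a b
  proof (cases "a \<in> P1")
    case True
    with that RV parts have "{a, b} \<in> proxy_Q_edges P1 P2 R"
      unfolding proxy_Q_edges_def by blast
    with y show ?thesis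
      by (simp add: edge_constant_def)
  next
    case False
    with that RV parts have "{b, a} \<in> proxy_Q_edges P1 P2 R"
      using symD[OF \<open>sym R\<close>] unfolding proxy_Q_edges_def by blast
    with y show ?thesis
      by (simp add: edge_constant_def insert_commute)
  qed
  show "\<forall>(a, b) \<in> R. y a = y b"
  proof clarify
    fix a b assume ab: "(a, b) \<in> R"
    show "y a = y b"
    proof (cases "R `` {a} \<subseteq> P1 \<or> R `` {a} \<subseteq> P2")
      case True
      with ab have "a = b \<or> {a, b} \<in> proxy_L_edges P1 P2 R"
        unfolding proxy_L_edges_def by blast
      with y show ?thesis
        by (auto simp: edge_constant_def)
    next
      case False
      with RV parts obtain c where ac: "(a, c) \<in> R" and c: "a \<in> P1 \<longleftrightarrow> c \<notin> P1"
        by blast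
      have "(b, c) \<in> R"
        using ab ac symD[OF \<open>sym R\<close>] transD[OF \<open>trans R\<close>] by blast
      then show ?thesis
        using cross[OF ab] cross[OF ac c] cross[of b c] c by metis
    qed
  qed
next
  assume const: "\<forall>(a, b) \<in> R. y a = y b"
  have "(a, b) \<in> R" if edge: "{a, b} \<in> proxy_L_edges P1 P2 R \<union> proxy_Q_edges P1 P2 R" for a b
  proof -
    have "sym R"
      using R by (rule equivE)
    obtain c d where "{a, b} = {c, d}" and "(c, d) \<in> R"
      using edge unfolding proxy_L_edges_def proxy_Q_edges_def by blast
    then show ?thesis
      using symD[OF \<open>sym R\<close>] by (auto simp: doubleton_eq_iff)
  qed
  with const show "edge_constant (proxy_L_edges P1 P2 R \<union> proxy_Q_edges P1 P2 R) y"
    unfolding edge_constant_def by blast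
qed

lemma mat_kernel_proxy:
  assumes "finite V"
  shows "x \<in> mat_kernel V (hybrid_laplacian (proxy_L_edges P1 P2 R) (proxy_Q_edges P1 P2 R)) \<longleftrightarrow>
    (\<forall>v. v \<notin> V \<longrightarrow> x v = 0) \<and>
    (\<forall>(a, b) \<in> R. (if a \<in> P1 then x a else - x a) = (if b \<in> P1 then x b else - x b))"
proof -
  have G: "hybrid_graph V (proxy_L_edges P1 P2 R) (proxy_Q_edges P1 P2 R)"
    using NOI_graph_proxy[OF assms] unfolding NOI_graph_def by blast
  have Q: "\<forall>e\<in>proxy_Q_edges P1 P2 R. \<exists>a\<in>P1. \<exists>b\<in>P2. e = {a, b}"
    unfolding proxy_Q_edges_def by auto
  show ?thesis
    unfolding mat_kernel_hybrid_laplacian_switching[OF G parts Q proxy_L_edges_within_part]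
      edge_constant_proxy_iff ..
qed

end

theorem mainTheorem7:
  fixes V :: "'a set" and EL EQ :: "'a set set"
  assumes "COI_graph V EL EQ"
  shows "\<exists>EL' EQ'. NOI_graph V EL' EQ' \<and>
           mat_kernel V (hybrid_laplacian EL' EQ') = mat_kernel V (hybrid_laplacian EL EQ)"
proof -
  have G: "hybrid_graph V EL EQ"
    using assms unfolding COI_graph_def by (rule conjunct1)
  then have "finite V" and edges: "\<forall>e\<in>EL \<union> EQ. e \<subseteq> V"
    unfolding hybrid_graph_def by blast+
  obtain P1 P2 where parts: "P1 \<union> P2 = V" "P1 \<inter> P2 = {}"
    and Q: "\<forall>e\<in>EQ. \<exists>a\<in>P1. \<exists>b\<in>P2. e = {a, b}" and L: "\<forall>e\<in>EL. e \<subseteq> P1 \<or> e \<subseteq> P2"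
    using assms unfolding COI_graph_def by auto
  define R where "R = component_rel V (EL \<union> EQ)"
  have R: "equiv V R"
    unfolding R_def by (rule equiv_component_rel)
  have edge_constant_iff: "edge_constant (EL \<union> EQ) y \<longleftrightarrow> (\<forall>(a, b) \<in> R. y a = y b)"
    for y :: "'a \<Rightarrow> real"
    unfolding R_def using edges by (rule edge_constant_iff_component_rel)
  have "mat_kernel V (hybrid_laplacian (proxy_L_edges P1 P2 R) (proxy_Q_edges P1 P2 R)) =
      mat_kernel V (hybrid_laplacian EL EQ)"
    unfolding set_eq_iff mat_kernel_proxy[OF R parts \<open>finite V\<close>]
      mat_kernel_hybrid_laplacian_switching[OF G parts Q L] edge_constant_iff
    by simp
  with NOI_graph_proxy[OF R parts \<open>finite V\<close>] show ?thesis
    by blast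
qed

end
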